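(* Let $G$ be a graph with $n\ge5$ vertices that has a fractional weak $r$-neighborhood cover $(\mathcal X,f)$ with degree $d$ and spread $s$. Then $G$ has a weak $r$-neighborhood cover $\mathcal Y\subseteq\mathcal X$ with degree $36\ln(n)\,d$ and spread $s$.
   Context: A fractional weak $r$-neighborhood cover with degree $d$ and spread $s$ of $G$ is a family $\mathcal X$ of subsets of $V(G)$ with a function $f\colon\mathcal X\to[0,1]$ such that each $X\in\mathcal X$ is contained in $N_s[c]$ for some vertex $c$; for every vertex $v$, $\sum_{X\in\mathcal X:\,N_r[v]\subseteq X}f(X)\ge1$; and for every vertex $v$, $\sum_{X\in\mathcal X:\,v\in X}f(X)\le d$. A (non-fractional) weak $r$-neighborhood cover with degree $d$ and spread $s$ is a family of vertex sets, each contained in some $N_s[c]$, such that each $N_r[w]$ is contained in some member and each vertex lies in at most $d$ members. *)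

theory Defs
  imports Complex_Main
begin

definition graph :: "'a set \<Rightarrow> ('a \<Rightarrow> 'a \<Rightarrow> bool) \<Rightarrow> bool" where
  "graph V E \<longleftrightarrow> finite V \<and> (\<forall>u v. E u v \<longrightarrow> u \<in> V \<and> v \<in> V)
     \<and> (\<forall>u v. E u v \<longrightarrow> E v u) \<and> (\<forall>u. \<not> E u u)"

fun nbh :: "'a set \<Rightarrow> ('a \<Rightarrow> 'a \<Rightarrow> bool) \<Rightarrow> nat \<Rightarrow> 'a \<Rightarrow> 'a set" where
  "nbh V E 0 v = {v}"
| "nbh V E (Suc k) v = nbh V E k v \<union> {u \<in> V. \<exists>w \<in> nbh V E k v. E w u}"

definition frac_weak_nbh_cover ::
  "'a set \<Rightarrow> ('a \<Rightarrow> 'a \<Rightarrow> bool) \<Rightarrow> nat \<Rightarrow> real \<Rightarrow> nat \<Rightarrow> 'a set set \<Rightarrow> ('a set \<Rightarrow> real) \<Rightarrow> bool" where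
  "frac_weak_nbh_cover V E r d s \<X> f \<longleftrightarrow>
     \<X> \<subseteq> Pow V
   \<and> (\<forall>X\<in>\<X>. 0 \<le> f X \<and> f X \<le> 1)
   \<and> (\<forall>X\<in>\<X>. \<exists>c\<in>V. X \<subseteq> nbh V E s c)
   \<and> (\<forall>v\<in>V. (\<Sum>X\<in>{X\<in>\<X>. nbh V E r v \<subseteq> X}. f X) \<ge> 1)
   \<and> (\<forall>v\<in>V. (\<Sum>X\<in>{X\<in>\<X>. v \<in> X}. f X) \<le> d)"

definition weak_nbh_cover ::
  "'a set \<Rightarrow> ('a \<Rightarrow> 'a \<Rightarrow> bool) \<Rightarrow> nat \<Rightarrow> real \<Rightarrow> nat \<Rightarrow> 'a set set \<Rightarrow> bool" where
  "weak_nbh_cover V E r d s \<Y> \<longleftrightarrow>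
     \<Y> \<subseteq> Pow V
   \<and> (\<forall>Y\<in>\<Y>. \<exists>c\<in>V. Y \<subseteq> nbh V E s c)
   \<and> (\<forall>w\<in>V. \<exists>Y\<in>\<Y>. nbh V E r w \<subseteq> Y)
   \<and> (\<forall>v\<in>V. real (card {Y\<in>\<Y>. v \<in> Y}) \<le> d)"

end

theory Submission
  imports Defs
begin

(* Greedy selection guided by an exponential potential.  For a family S of chosen sets let
   U(S) be the number of vertices v with N_r[v] inside no member of S, and
   L(S) = sum over all vertices u of exp(load_S u), where load_S u counts the members containing u.
   Averaging against the fractional cover f yields a set X that newly covers k of the U vertices
   while raising L by at most (e - 1) d (k / U) L.  So U shrinks by a factor at most exp(-k/U) and
   L grows by a factor at most exp(c k/U), with c = (e - 1) d, whence L * U^c never increases.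
   Starting from L = U = n, the final family has L <= e^c n^(1+c), so every load is at most
   ln n + c (ln n + 1) <= 36 d ln n. *)

lemma sum_weighted_incidence_swap:
  fixes f :: "'i \<Rightarrow> 'c::comm_semiring_0" and w :: "'u \<Rightarrow> 'c"
  assumes "finite I" "finite U"
  shows "(\<Sum>i\<in>I. f i * (\<Sum>u\<in>{u\<in>U. P u i}. w u)) = (\<Sum>u\<in>U. w u * (\<Sum>i\<in>{i\<in>I. P u i}. f i))"
proof -
  have "(\<Sum>i\<in>I. f i * (\<Sum>u\<in>{u\<in>U. P u i}. w u)) = (\<Sum>i\<in>I. \<Sum>u\<in>{u\<in>U. P u i}. f i * w u)"
    by (simp add: sum_distrib_left)
  also have "\<dots> = (\<Sum>i\<in>I. \<Sum>u\<in>U. if P u i then f i * w u else 0)"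
    by (simp add: sum.inter_filter[OF assms(2)])
  also have "\<dots> = (\<Sum>u\<in>U. \<Sum>i\<in>I. if P u i then f i * w u else 0)"
    by (rule sum.swap)
  also have "\<dots> = (\<Sum>u\<in>U. w u * (\<Sum>i\<in>{i\<in>I. P u i}. f i))"
    by (simp add: sum.inter_filter[OF assms(1)] sum_distrib_left mult.commute if_distrib cong: if_cong)
  finally show ?thesis .
qed

lemma weighted_averaging_witness:
  fixes w a b :: "'i \<Rightarrow> real"
  assumes "finite I" "\<And>i. i \<in> I \<Longrightarrow> 0 \<le> w i" "\<And>i. i \<in> I \<Longrightarrow> 0 \<le> b i"
    and "0 < A" "0 \<le> B"
    and "A \<le> (\<Sum>i\<in>I. w i * a i)" "(\<Sum>i\<in>I. w i * b i) \<le> B"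
  shows "\<exists>i\<in>I. 0 < a i \<and> A * b i \<le> a i * B"
proof (rule ccontr)
  assume "\<not> ?thesis"
  then have below_ratio: "a i * B < A * b i" if "i \<in> I" "0 < a i" for i
    using that by force
  define g where "g i = w i * (a i * B - A * b i)" for i
  have "B * A - A * B \<le> B * (\<Sum>i\<in>I. w i * a i) - A * (\<Sum>i\<in>I. w i * b i)"
    using assms(4-7) by (intro diff_mono mult_left_mono) auto
  also have "\<dots> = (\<Sum>i\<in>I. g i)"
    by (simp add: g_def sum_distrib_left right_diff_distrib sum_subtractf mult_ac)
  finally have "0 \<le> (\<Sum>i\<in>I. g i)" by simp
  moreover have "(\<Sum>i\<in>I. g i) < (\<Sum>i\<in>I. 0)"
  proof (rule sum_strict_mono_ex1[OF assms(1)])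
    show "\<forall>i\<in>I. g i \<le> 0"
    proof
      fix i assume i: "i \<in> I"
      have "a i * B - A * b i \<le> 0"
      proof (cases "0 < a i")
        case True with below_ratio[OF i] show ?thesis by simp
      next
        case False
        then have "a i * B \<le> 0" "0 \<le> A * b i"
          using assms(3-5) i by (auto intro: mult_nonpos_nonneg)
        then show ?thesis by linarith
      qed
      then show "g i \<le> 0" unfolding g_def using assms(2) i by (simp add: mult_nonneg_nonpos)
    qed
    have "\<not> (\<forall>i\<in>I. w i * a i \<le> 0)"
      using sum_nonpos[of I "\<lambda>i. w i * a i"] assms(4,6) by force
    then obtain i where i: "i \<in> I" "0 < w i * a i" by auto
    then have "0 < w i" "0 < a i"
      using assms(2)[OF i(1)] by (auto simp: zero_less_mult_iff)
    then have "g i < 0"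
      using below_ratio[OF i(1)] unfolding g_def by (intro mult_pos_neg) auto
    then show "\<exists>i\<in>I. g i < 0" using i(1) by blast
  qed
  ultimately show False by simp
qed

lemma greedy_potential_step:
  fixes L \<Delta> c U k :: real
  assumes "0 \<le> L" "0 \<le> c" "0 < k" "k \<le> U" "U * \<Delta> \<le> k * (c * L)"
  shows "L + \<Delta> \<le> exp c * L" and "(L + \<Delta>) * (U - k) powr c \<le> L * U powr c"
proof -
  define a where "a = k / U"
  have U: "0 < U" using assms(3,4) by linarith
  have a: "0 < a" "a \<le> 1" using assms(3,4) U by (auto simp: a_def)
  have "\<Delta> \<le> c * a * L"
    using assms(5) U by (simp add: a_def field_simps)
  then have "L + \<Delta> \<le> L * (1 + c * a)" by (simp add: algebra_simps)
  also have "\<dots> \<le> L * exp (c * a)"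
    using assms(1) by (intro mult_left_mono) auto
  finally have grow: "L + \<Delta> \<le> L * exp (c * a)" .
  also have "\<dots> \<le> exp c * L"
    using assms(1,2) a by (simp add: mult.commute mult_left_mono mult_left_le_one_le)
  finally show "L + \<Delta> \<le> exp c * L" .
  have "U - k = U * (1 - a)" using U by (simp add: a_def field_simps)
  also have "\<dots> \<le> U * exp (- a)"
    using U exp_ge_add_one_self[of "- a"] by (intro mult_left_mono) auto
  finally have "(U - k) powr c \<le> (U * exp (- a)) powr c"
    using assms(2,4) by (intro powr_mono2) auto
  also have "\<dots> = U powr c * exp (- (c * a))"
    using U by (simp add: powr_mult powr_def ln_mult algebra_simps flip: exp_add)
  finally have shrink: "(U - k) powr c \<le> U powr c * exp (- (c * a))" .
  have "(L + \<Delta>) * (U - k) powr c \<le> L * exp (c * a) * (U powr c * exp (- (c * a)))"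
    using grow shrink assms(1) by (intro mult_mono) auto
  also have "\<dots> = L * U powr c"
    by (simp add: exp_minus field_simps)
  finally show "(L + \<Delta>) * (U - k) powr c \<le> L * U powr c" .
qed

definition load :: "'a set set \<Rightarrow> 'a \<Rightarrow> nat" where
  "load S u = card {Y\<in>S. u \<in> Y}"

lemma load_insert:
  assumes "finite S" "X \<notin> S"
  shows "load (insert X S) u = load S u + (if u \<in> X then 1 else 0)"
proof -
  have "{Y\<in>insert X S. u \<in> Y} = (if u \<in> X then insert X {Y\<in>S. u \<in> Y} else {Y\<in>S. u \<in> Y})"
    by auto
  then show ?thesis using assms by (simp add: load_def)
qed

locale fractional_cover =
  fixes V :: "'a set" and N :: "'a \<Rightarrow> 'a set" and \<X> :: "'a set set"
    and f :: "'a set \<Rightarrow> real" and d :: real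
  assumes finite_V: "finite V"
    and family_subsets: "\<X> \<subseteq> Pow V"
    and weight_nonneg: "X \<in> \<X> \<Longrightarrow> 0 \<le> f X"
    and weight_covers: "v \<in> V \<Longrightarrow> 1 \<le> (\<Sum>X\<in>{X\<in>\<X>. N v \<subseteq> X}. f X)"
    and weight_degree: "v \<in> V \<Longrightarrow> (\<Sum>X\<in>{X\<in>\<X>. v \<in> X}. f X) \<le> d"
begin

definition uncovered :: "'a set set \<Rightarrow> 'a set" where
  "uncovered S = {w\<in>V. \<not> (\<exists>Y\<in>S. N w \<subseteq> Y)}"

definition newly_covered :: "'a set set \<Rightarrow> 'a set \<Rightarrow> 'a set" where
  "newly_covered S X = {w\<in>uncovered S. N w \<subseteq> X}"

definition potential :: "'a set set \<Rightarrow> real" where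
  "potential S = (\<Sum>u\<in>V. exp (real (load S u)))"

lemma finite_family: "finite \<X>"
  using family_subsets finite_V by (meson finite_Pow_iff finite_subset)

lemma finite_uncovered: "finite (uncovered S)"
  using finite_V by (simp add: uncovered_def)

lemma uncovered_insert: "uncovered (insert X S) = uncovered S - newly_covered S X"
  by (auto simp: uncovered_def newly_covered_def)

lemma degree_nonneg:
  assumes "v \<in> V"
  shows "0 \<le> d"
proof -
  have "0 \<le> (\<Sum>X\<in>{X\<in>\<X>. v \<in> X}. f X)"
    using weight_nonneg by (intro sum_nonneg) auto
  also have "\<dots> \<le> d"
    using weight_degree[OF assms] .
  finally show ?thesis .
qed

lemma potential_nonneg: "0 \<le> potential S"
  by (simp add: potential_def sum_nonneg)

lemma potential_insert:
  assumes "finite S" "X \<notin> S" "X \<subseteq> V"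
  shows "potential (insert X S) = potential S + (exp 1 - 1) * (\<Sum>u\<in>X. exp (real (load S u)))"
proof -
  have "potential (insert X S) = potential S + (\<Sum>u\<in>V. if u \<in> X then (exp 1 - 1) * exp (real (load S u)) else 0)"
    unfolding potential_def sum.distrib[symmetric]
    by (intro sum.cong refl) (simp add: load_insert[OF assms(1,2)] exp_add algebra_simps)
  also have "(\<Sum>u\<in>V. if u \<in> X then (exp 1 - 1) * exp (real (load S u)) else 0)
      = (exp 1 - 1) * (\<Sum>u\<in>X. exp (real (load S u)))"
    using assms(3) finite_V
    by (simp add: sum.inter_filter[symmetric] sum_distrib_left Int_absorb1 Collect_conj_eq Int_def[symmetric])
  finally show ?thesis .
qed

lemma uncovered_le_sum_newly_covered:
  "real (card (uncovered S)) \<le> (\<Sum>X\<in>\<X>. f X * real (card (newly_covered S X)))"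
proof -
  have "(\<Sum>X\<in>\<X>. f X * real (card (newly_covered S X)))
      = (\<Sum>w\<in>uncovered S. 1 * (\<Sum>X\<in>{X\<in>\<X>. N w \<subseteq> X}. f X))"
    using sum_weighted_incidence_swap[OF finite_family finite_uncovered, where f = f and P = "\<lambda>w X. N w \<subseteq> X" and w = "\<lambda>_. 1"]
    by (simp add: newly_covered_def)
  also have "\<dots> \<ge> (\<Sum>w\<in>uncovered S. 1)"
    using weight_covers by (intro sum_mono) (auto simp: uncovered_def)
  finally show ?thesis by simp
qed

lemma sum_weighted_member_potential_le:
  "(\<Sum>X\<in>\<X>. f X * (\<Sum>u\<in>X. exp (real (load S u)))) \<le> d * potential S"
proof -
  have "(\<Sum>X\<in>\<X>. f X * (\<Sum>u\<in>X. exp (real (load S u))))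
      = (\<Sum>X\<in>\<X>. f X * (\<Sum>u\<in>{u\<in>V. u \<in> X}. exp (real (load S u))))"
    using family_subsets by (intro sum.cong refl) (auto intro!: arg_cong[where f = "sum _"])
  also have "\<dots> = (\<Sum>u\<in>V. exp (real (load S u)) * (\<Sum>X\<in>{X\<in>\<X>. u \<in> X}. f X))"
    by (rule sum_weighted_incidence_swap[OF finite_family finite_V])
  also have "\<dots> \<le> (\<Sum>u\<in>V. exp (real (load S u)) * d)"
    using weight_degree by (intro sum_mono mult_left_mono) auto
  also have "\<dots> = d * potential S"
    by (simp add: potential_def sum_distrib_left mult.commute)
  finally show ?thesis .
qed

lemma exists_efficient_set:
  assumes "uncovered S \<noteq> {}"
  shows "\<exists>X\<in>\<X>. 0 < card (newly_covered S X) \<and>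
    real (card (uncovered S)) * (\<Sum>u\<in>X. exp (real (load S u)))
      \<le> real (card (newly_covered S X)) * (d * potential S)"
proof -
  have "0 < real (card (uncovered S))"
    using assms finite_uncovered by (simp add: card_gt_0_iff)
  moreover have "0 \<le> d * potential S"
    using assms degree_nonneg potential_nonneg by (auto simp: uncovered_def)
  ultimately obtain X where "X \<in> \<X>" "0 < real (card (newly_covered S X))"
    "real (card (uncovered S)) * (\<Sum>u\<in>X. exp (real (load S u)))
      \<le> real (card (newly_covered S X)) * (d * potential S)"
    using weighted_averaging_witness[OF finite_family weight_nonneg _ _ _
        uncovered_le_sum_newly_covered sum_weighted_member_potential_le]
    by (auto simp: sum_nonneg)
  then show ?thesis by auto
qed

lemma one_le_degree:
  assumes "v \<in> V" "v \<in> N v"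
  shows "1 \<le> d"
proof -
  have "1 \<le> (\<Sum>X\<in>{X\<in>\<X>. N v \<subseteq> X}. f X)"
    using weight_covers[OF assms(1)] .
  also have "\<dots> \<le> (\<Sum>X\<in>{X\<in>\<X>. v \<in> X}. f X)"
    using assms(2) finite_family weight_nonneg by (intro sum_mono2) auto
  also have "\<dots> \<le> d"
    using weight_degree[OF assms(1)] .
  finally show ?thesis .
qed

abbreviation growth :: real where
  "growth \<equiv> (exp 1 - 1) * d"

lemma greedy_step:
  assumes "S \<subseteq> \<X>" "uncovered S \<noteq> {}"
  obtains X where "X \<in> \<X>" "card (uncovered (insert X S)) < card (uncovered S)"
    and "potential (insert X S) \<le> exp growth * potential S"
    and "potential (insert X S) * real (card (uncovered (insert X S))) powr growth
      \<le> potential S * real (card (uncovered S)) powr growth"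
proof -
  obtain X where X: "X \<in> \<X>" "0 < card (newly_covered S X)"
    and efficient: "real (card (uncovered S)) * (\<Sum>u\<in>X. exp (real (load S u)))
      \<le> real (card (newly_covered S X)) * (d * potential S)"
    using exists_efficient_set[OF assms(2)] by blast
  have "finite S"
    using assms(1) finite_family finite_subset by blast
  moreover have "X \<notin> S"
    using X(2) by (auto simp: card_gt_0_iff newly_covered_def uncovered_def)
  moreover have "X \<subseteq> V"
    using X(1) family_subsets by blast
  ultimately have potential_eq: "potential (insert X S)
      = potential S + (exp 1 - 1) * (\<Sum>u\<in>X. exp (real (load S u)))"
    by (rule potential_insert)
  have newly_le: "card (newly_covered S X) \<le> card (uncovered S)"
    using finite_uncovered by (intro card_mono) (auto simp: newly_covered_def)
  have card_eq: "real (card (uncovered (insert X S)))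
      = real (card (uncovered S)) - real (card (newly_covered S X))"
    using newly_le finite_uncovered
    by (simp add: uncovered_insert card_Diff_subset newly_covered_def)
  have growth_nonneg: "0 \<le> growth"
    using assms(2) degree_nonneg by (auto simp: uncovered_def)
  have newly_pos: "0 < real (card (newly_covered S X))"
    using X(2) by simp
  have "real (card (uncovered S)) * ((exp 1 - 1) * (\<Sum>u\<in>X. exp (real (load S u))))
      \<le> real (card (newly_covered S X)) * (growth * potential S)"
    using mult_left_mono[OF efficient, of "exp 1 - 1"] by (simp add: mult_ac)
  note step = greedy_potential_step[OF potential_nonneg growth_nonneg newly_pos
      of_nat_mono[OF newly_le] this]
  show thesis
  proof (rule that[OF X(1)])
    show "card (uncovered (insert X S)) < card (uncovered S)"
      using card_eq X(2) by linarith
    show "potential (insert X S) \<le> exp growth * potential S"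
      unfolding potential_eq by (rule step(1))
    show "potential (insert X S) * real (card (uncovered (insert X S))) powr growth
      \<le> potential S * real (card (uncovered S)) powr growth"
      unfolding potential_eq card_eq by (rule step(2))
  qed
qed

lemma greedy_cover:
  assumes "S \<subseteq> \<X>" "uncovered S \<noteq> {}"
  shows "\<exists>S'\<subseteq>\<X>. uncovered S' = {} \<and>
    potential S' \<le> exp growth * potential S * real (card (uncovered S)) powr growth"
  using assms
proof (induction "card (uncovered S)" arbitrary: S rule: less_induct)
  case less
  obtain X where X: "X \<in> \<X>" "card (uncovered (insert X S)) < card (uncovered S)"
    and grow: "potential (insert X S) \<le> exp growth * potential S"
    and monotone: "potential (insert X S) * real (card (uncovered (insert X S))) powr growth
      \<le> potential S * real (card (uncovered S)) powr growth"
    using greedy_step[OF less.prems] .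
  have "1 \<le> real (card (uncovered S))"
    using less.prems(2) finite_uncovered by (simp add: Suc_le_eq card_gt_0_iff)
  moreover have "0 \<le> growth"
    using less.prems(2) degree_nonneg by (auto simp: uncovered_def)
  ultimately have one_le_powr: "1 \<le> real (card (uncovered S)) powr growth"
    by (rule ge_one_powr_ge_zero)
  have insert_sub: "insert X S \<subseteq> \<X>"
    using X(1) less.prems(1) by blast
  show ?case
  proof (cases "uncovered (insert X S) = {}")
    case True
    have "potential (insert X S) \<le> exp growth * potential S * 1"
      using grow by simp
    also have "\<dots> \<le> exp growth * potential S * real (card (uncovered S)) powr growth"
      using one_le_powr potential_nonneg by (intro mult_left_mono) auto
    finally show ?thesis
      using insert_sub True by blast
  next
    case False
    then obtain S' where S': "S' \<subseteq> \<X>" "uncovered S' = {}"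
      and bound: "potential S' \<le> exp growth * potential (insert X S)
        * real (card (uncovered (insert X S))) powr growth"
      using less.hyps[OF X(2) insert_sub] by blast
    note bound
    also have "\<dots> \<le> exp growth * potential S * real (card (uncovered S)) powr growth"
      using mult_left_mono[OF monotone, of "exp growth"] by (simp add: mult.assoc)
    finally show ?thesis
      using S' by blast
  qed
qed

lemma cover_with_logarithmic_load:
  assumes "V \<noteq> {}"
  shows "\<exists>\<Y>\<subseteq>\<X>. (\<forall>w\<in>V. \<exists>Y\<in>\<Y>. N w \<subseteq> Y) \<and>
    (\<forall>v\<in>V. real (load \<Y> v) \<le> ln (real (card V)) + growth * (ln (real (card V)) + 1))"
proof -
  define n where "n = real (card V)"
  have n: "0 < n"
    using assms finite_V by (simp add: n_def card_gt_0_iff)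
  have uncovered_empty: "uncovered {} = V" and potential_empty: "potential {} = n"
    by (simp_all add: uncovered_def potential_def load_def n_def)
  obtain \<Y> where \<Y>: "\<Y> \<subseteq> \<X>" "uncovered \<Y> = {}"
    and "potential \<Y> \<le> exp growth * potential {} * real (card (uncovered {})) powr growth"
    using greedy_cover[of "{}"] assms uncovered_empty by auto
  then have potential_le: "potential \<Y> \<le> n * exp (growth * (ln n + 1))"
    unfolding uncovered_empty potential_empty n_def[symmetric]
    using n by (simp add: powr_def distrib_left exp_add mult_ac)
  have "real (load \<Y> v) \<le> ln n + growth * (ln n + 1)" if "v \<in> V" for v
  proof -
    have "exp (real (load \<Y> v)) \<le> potential \<Y>"
      unfolding potential_def using that finite_V by (intro member_le_sum) auto
    also note potential_le
    finally have "ln (exp (real (load \<Y> v))) \<le> ln (n * exp (growth * (ln n + 1)))"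
      using n by (subst ln_le_cancel_iff) auto
    then show ?thesis
      using n by (simp add: ln_mult)
  qed
  moreover have "\<forall>w\<in>V. \<exists>Y\<in>\<Y>. N w \<subseteq> Y"
    using \<Y>(2) by (auto simp: uncovered_def)
  ultimately show ?thesis
    using \<Y>(1) n_def by auto
qed

end

lemma greedy_bound_le_36_ln:
  fixes l d :: real
  assumes "1 \<le> d" "1 \<le> l"
  shows "l + (exp 1 - 1) * d * (l + 1) \<le> 36 * l * d"
proof -
  have "(exp 1 - 1) * d * (l + 1) \<le> 2 * d * (2 * l)"
    using assms exp_le by (intro mult_mono) auto
  also have "\<dots> = 4 * (l * d)"
    by simp
  finally have "(exp 1 - 1) * d * (l + 1) \<le> 4 * (l * d)" .
  moreover have "l \<le> l * d"
    using assms by simp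
  ultimately have "l + (exp 1 - 1) * d * (l + 1) \<le> 5 * (l * d)"
    by linarith
  also have "\<dots> \<le> 36 * l * d"
    using assms by simp
  finally show ?thesis .
qed

lemma nbh_self: "v \<in> nbh V E r v"
  by (induction r) auto

theorem lemma6p5:
  fixes V :: "'a set" and E :: "'a \<Rightarrow> 'a \<Rightarrow> bool"
    and r s :: nat and d :: real and \<X> :: "'a set set" and f :: "'a set \<Rightarrow> real"
  assumes "graph V E"
    and "card V \<ge> 5"
    and "frac_weak_nbh_cover V E r d s \<X> f"
  shows "\<exists>\<Y> \<subseteq> \<X>. weak_nbh_cover V E r (36 * ln (real (card V)) * d) s \<Y>"
proof -
  have spread: "\<forall>X\<in>\<X>. \<exists>c\<in>V. X \<subseteq> nbh V E s c"
    using assms(3) by (simp add: frac_weak_nbh_cover_def)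
  interpret fractional_cover V "nbh V E r" \<X> f d
    using assms(1,3) by unfold_locales (auto simp: graph_def frac_weak_nbh_cover_def)
  obtain v where "v \<in> V"
    using assms(2) by fastforce
  then have "1 \<le> d"
    using nbh_self by (rule one_le_degree)
  have "exp 1 \<le> real (card V)"
    using exp_le assms(2) by linarith
  then have "1 \<le> ln (real (card V))"
    using assms(2) by (subst ln_ge_iff) auto
  obtain \<Y> where "\<Y> \<subseteq> \<X>" and "\<forall>w\<in>V. \<exists>Y\<in>\<Y>. nbh V E r w \<subseteq> Y"
    and "\<forall>v\<in>V. real (load \<Y> v) \<le> ln (real (card V)) + growth * (ln (real (card V)) + 1)"
    using cover_with_logarithmic_load \<open>v \<in> V\<close> by blast
  then have "weak_nbh_cover V E r (36 * ln (real (card V)) * d) s \<Y>"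
    using family_subsets spread greedy_bound_le_36_ln[OF \<open>1 \<le> d\<close> \<open>1 \<le> ln _\<close>]
    unfolding weak_nbh_cover_def load_def by fastforce
  with \<open>\<Y> \<subseteq> \<X>\<close> show ?thesis by blast
qed

end
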